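(* Let $\Lambda=(V,\pi,v,\le)$ be a bi-colored weighted ordered vertex with $r(\Lambda)=2$ and $|V_\bullet|=2$, identify $V=\{1,\dots,l\}$ via $\le$, and suppose $s(\Lambda)\ne0$. Then $l\ge3$ and: (1) if $V_\bullet=\{1,2\}$, then $s(\Lambda)=(-1)^{l-1}$; (2) if $V_\bullet=\{1,a\}$ with $a\ge3$, then $v(2)+\dots+v(a-2)<v(a-1)+v(a+1)+\dots+v(l)$, $v(2)+\dots+v(a-1)\ge v(a+1)+\dots+v(l)$, and $s(\Lambda)=(-1)^l$; (3) if $V_\bullet=\{2,3\}$, then $v(1)<v(4)+\dots+v(l)$ and $s(\Lambda)=(-1)^l$; (4) if $V_\bullet=\{2,a\}$ with $a\ge4$, then $v(1)+v(3)+\dots+v(a-2)<v(a-1)+v(a+1)+\dots+v(l)$, $v(1)+v(3)+\dots+v(a-1)\ge v(a+1)+\dots+v(l)$, and $s(\Lambda)=(-1)^{l-1}$.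
   Context: A bi-colored weighted ordered vertex is $\Lambda=(V,\pi,v,\le)$ with $V$ a finite set, $\pi\colon V\to\{\bullet,\circ\}$, $v\colon V\to\mathbb{Z}_{\ge1}$, $\le$ a total order on $V$. Put $V_\bullet=\pi^{-1}(\bullet)$, $V_\circ=\pi^{-1}(\circ)$, $r(\Lambda)=\sum_{i\in V_\bullet}v(i)$; $v_i=(v(i),0)$ if $i\in V_\bullet$, $v_i=(0,v(i))$ if $i\in V_\circ$. For $(r,n)\in\mathbb{Z}_{\ge0}^2\setminus\{0\}$ let $\mu(r,n)=n/r\in\mathbb{Q}\cup\{\infty\}$ ($\infty$ if $r=0$). For vectors $w_1,\dots,w_l$ define $s_l(w_1,\dots,w_l)=(-1)^k$ if for each $i=1,\dots,l-1$ either (a) $\mu(w_i)>\mu(w_{i+1})$ and $\mu(w_1+\dots+w_i)\ge\mu(w_{i+1}+\dots+w_l)$, or (b) $\mu(w_i)\le\mu(w_{i+1})$ and $\mu(w_1+\dots+w_i)<\mu(w_{i+1}+\dots+w_l)$, where $k$ is the number of $i$ satisfying (b); otherwise $s_l=0$. Set $s(\Lambda)=s_l(v_1,\dots,v_l)$, $l=|V|$. Empty sums are $0$. *)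

theory Defs
  imports Complex_Main "HOL-Library.Extended_Real"
begin

datatype color = Black | White

definition mu :: "nat \<times> nat \<Rightarrow> ereal" where
  "mu w = (if fst w = 0 then \<infinity> else ereal (real (snd w) / real (fst w)))"

definition vsum :: "(nat \<times> nat) list \<Rightarrow> nat \<times> nat" where
  "vsum ws = (sum_list (map fst ws), sum_list (map snd ws))"

text \<open>Conditions (a) and (b) for index i (1-based, 1 <= i <= l-1) of ws = [w_1,...,w_l].\<close>
definition condA :: "(nat \<times> nat) list \<Rightarrow> nat \<Rightarrow> bool" where
  "condA ws i = (mu (ws ! (i - 1)) > mu (ws ! i) \<and>
                 mu (vsum (take i ws)) \<ge> mu (vsum (drop i ws)))"

definition condB :: "(nat \<times> nat) list \<Rightarrow> nat \<Rightarrow> bool" where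
  "condB ws i = (mu (ws ! (i - 1)) \<le> mu (ws ! i) \<and>
                 mu (vsum (take i ws)) < mu (vsum (drop i ws)))"

definition s_l :: "(nat \<times> nat) list \<Rightarrow> int" where
  "s_l ws = (let l = length ws in
     if (\<forall>i\<in>{1..<l}. condA ws i \<or> condB ws i)
     then (-1) ^ card {i\<in>{1..<l}. condB ws i} else 0)"

text \<open>A bi-colored weighted ordered vertex with V identified with {1..l} via its order:
  colour col and weight v on {1..l}.  The vector v_i.\<close>
definition vvec :: "(nat \<Rightarrow> color) \<Rightarrow> (nat \<Rightarrow> nat) \<Rightarrow> nat \<Rightarrow> nat \<times> nat" where
  "vvec col v i = (if col i = Black then (v i, 0) else (0, v i))"

definition s_vertex :: "nat \<Rightarrow> (nat \<Rightarrow> color) \<Rightarrow> (nat \<Rightarrow> nat) \<Rightarrow> int" where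
  "s_vertex l col v = s_l (map (vvec col v) [1..<l+1])"

definition black_set :: "nat \<Rightarrow> (nat \<Rightarrow> color) \<Rightarrow> nat set" where
  "black_set l col = {i\<in>{1..l}. col i = Black}"

definition r_vertex :: "nat \<Rightarrow> (nat \<Rightarrow> color) \<Rightarrow> (nat \<Rightarrow> nat) \<Rightarrow> nat" where
  "r_vertex l col v = (\<Sum>i\<in>black_set l col. v i)"

end

theory Submission imports Defs begin

text \<open>
  Since the black weights sum to 2 over two black vertices, both black vectors are \<open>(1,0)\<close>,
  of slope 0, while all white vectors have slope \<open>\<infinity>\<close>. Hence the only slope descents are the
  cuts \<open>i\<close> with \<open>i\<close> white and \<open>i+1\<close> black, so \<open>s(\<Lambda>)\<close> is \<open>(-1)\<close> to the number of remaining cuts.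
  At a cut with one black vertex on either side both partial sums have the form \<open>(1,n)\<close>, of
  slope \<open>n\<close>, so the partial-sum condition of the cut compares the two white weights directly; for
  \<open>l = 2\<close> it would demand \<open>0 < 0\<close>.
\<close>

lemma sum_eq_card_imp_eq_1:
  fixes f :: "'a \<Rightarrow> nat"
  assumes "finite A" "\<forall>i\<in>A. 1 \<le> f i" "sum f A = card A" "i \<in> A"
  shows "f i = 1"
proof -
  have "sum (\<lambda>j. f j - 1) A = sum f A - card A"
    using assms(1,2) by (simp add: sum_subtractf_nat)
  then have "sum (\<lambda>j. f j - 1) A = 0" using assms(3) by simp
  then show ?thesis using assms by (simp add: le_antisym)
qed

lemma s_l_nonzero_all_conditions:
  assumes "s_l ws \<noteq> 0"
  shows "\<forall>i\<in>{1..<length ws}. condA ws i \<or> condB ws i"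
    and "s_l ws = (-1) ^ card {i\<in>{1..<length ws}. condB ws i}"
  using assms by (auto simp: s_l_def Let_def split: if_splits)

lemma s_l_nonzero_condB_iff:
  assumes "s_l ws \<noteq> 0" "i \<in> {1..<length ws}"
  shows "condB ws i \<longleftrightarrow> \<not> mu (ws ! (i - 1)) > mu (ws ! i)"
proof -
  have "condA ws i \<or> condB ws i" using s_l_nonzero_all_conditions(1)[OF assms(1)] assms(2) by blast
  then show ?thesis by (auto simp: condA_def condB_def)
qed

lemma s_l_nonzero_sign:
  assumes "s_l ws \<noteq> 0"
  shows "s_l ws = (-1) ^ card {i\<in>{1..<length ws}. \<not> mu (ws ! (i - 1)) > mu (ws ! i)}"
proof -
  have "{i\<in>{1..<length ws}. condB ws i} = {i\<in>{1..<length ws}. \<not> mu (ws ! (i - 1)) > mu (ws ! i)}"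
    using s_l_nonzero_condB_iff[OF assms] by blast
  then show ?thesis using s_l_nonzero_all_conditions(2)[OF assms] by simp
qed

lemma s_l_nonzero_descent:
  assumes "s_l ws \<noteq> 0" "i \<in> {1..<length ws}" "mu (ws ! (i - 1)) > mu (ws ! i)"
  shows "mu (vsum (take i ws)) \<ge> mu (vsum (drop i ws))"
  using s_l_nonzero_all_conditions(1)[OF assms(1)] assms(2,3) by (auto simp: condA_def condB_def)

lemma s_l_nonzero_no_descent:
  assumes "s_l ws \<noteq> 0" "i \<in> {1..<length ws}" "\<not> mu (ws ! (i - 1)) > mu (ws ! i)"
  shows "mu (vsum (take i ws)) < mu (vsum (drop i ws))"
  using s_l_nonzero_condB_iff[OF assms(1,2)] assms(3) by (simp add: condB_def)

lemma vsum_take_map_upt: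
  assumes "i \<le> l"
  shows "vsum (take i (map f [1..<l+1])) = (\<Sum>j=1..i. fst (f j), \<Sum>j=1..i. snd (f j))"
proof -
  have "take i [1..<l+1] = [1..<i+1]" using assms take_upt[of 1 i "l+1"] by (simp del: upt_Suc)
  then show ?thesis unfolding vsum_def
    by (simp add: take_map sum_list_distinct_conv_sum_set atLeastLessThanSuc_atLeastAtMost del: upt_Suc)
qed

lemma vsum_drop_map_upt:
  assumes "i \<le> l"
  shows "vsum (drop i (map f [1..<l+1])) = (\<Sum>j=i+1..l. fst (f j), \<Sum>j=i+1..l. snd (f j))"
proof -
  have "drop i [1..<l+1] = [i+1..<l+1]" using assms by (simp add: drop_upt)
  then show ?thesis unfolding vsum_def
    by (simp add: drop_map sum_list_distinct_conv_sum_set atLeastLessThanSuc_atLeastAtMost del: upt_Suc)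
qed

lemma neg_one_power_diff_even:
  assumes "k \<le> n" "even k"
  shows "(-1::'a::ring_1) ^ (n - k) = (-1) ^ n"
proof -
  have "(-1::'a) ^ n = (-1) ^ (n - k) * (-1) ^ k" using assms(1) by (simp flip: power_add)
  then show ?thesis using assms(2) by simp
qed

lemma mu_one: "mu (Suc 0, n) = ereal (real n)"
  by (simp add: mu_def)

lemma black_set_subset: "black_set l col \<subseteq> {1..l}"
  by (auto simp: black_set_def)

locale nonzero_unit_black_vertex =
  fixes l :: nat and col :: "nat \<Rightarrow> color" and v :: "nat \<Rightarrow> nat"
  assumes black_weight_one: "\<And>i. i \<in> black_set l col \<Longrightarrow> v i = 1"
    and s_nonzero: "s_vertex l col v \<noteq> 0"
begin

abbreviation B :: "nat set" where "B \<equiv> black_set l col"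

abbreviation ws :: "(nat \<times> nat) list" where "ws \<equiv> map (vvec col v) [1..<l+1]"

lemma s_l_ws_nonzero: "s_l ws \<noteq> 0"
  using s_nonzero by (simp add: s_vertex_def)

lemma mu_vvec: "j \<in> {1..l} \<Longrightarrow> mu (vvec col v j) = (if j \<in> B then 0 else \<infinity>)"
  using black_weight_one by (auto simp: vvec_def mu_def black_set_def)

lemma descent_iff:
  assumes "i \<in> {1..<l}"
  shows "mu (ws ! (i - 1)) > mu (ws ! i) \<longleftrightarrow> i \<notin> B \<and> Suc i \<in> B"
proof -
  have "ws ! (i - 1) = vvec col v i" "ws ! i = vvec col v (Suc i)"
    using assms by (auto simp del: upt_Suc)
  then show ?thesis using assms mu_vvec[of i] mu_vvec[of "Suc i"] by auto
qed

lemma sum_fst_vvec: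
  assumes "I \<subseteq> {1..l}"
  shows "(\<Sum>j\<in>I. fst (vvec col v j)) = card (I \<inter> B)"
proof -
  have "(\<Sum>j\<in>I. fst (vvec col v j)) = (\<Sum>j\<in>I. if j \<in> B then 1 else 0)"
    using assms black_weight_one by (intro sum.cong) (auto simp: vvec_def black_set_def)
  then show ?thesis using finite_subset[OF assms] by (simp add: sum.If_cases)
qed

lemma sum_snd_vvec:
  assumes "I \<subseteq> {1..l}"
  shows "(\<Sum>j\<in>I. snd (vvec col v j)) = sum v (I - B)"
proof -
  have "(\<Sum>j\<in>I. snd (vvec col v j)) = (\<Sum>j\<in>I. if j \<in> B then 0 else v j)"
    using assms by (intro sum.cong) (auto simp: vvec_def black_set_def)
  then show ?thesis using finite_subset[OF assms] by (simp add: sum.If_cases Diff_eq)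
qed

lemma vsum_take_ws: "i \<le> l \<Longrightarrow> vsum (take i ws) = (card ({1..i} \<inter> B), sum v ({1..i} - B))"
  using vsum_take_map_upt[of i l "vvec col v"] by (simp add: sum_fst_vvec sum_snd_vvec del: upt_Suc)

lemma vsum_drop_ws: "i \<le> l \<Longrightarrow> vsum (drop i ws) = (card ({Suc i..l} \<inter> B), sum v ({Suc i..l} - B))"
  using vsum_drop_map_upt[of i l "vvec col v"] by (simp add: sum_fst_vvec sum_snd_vvec del: upt_Suc)

lemma sign_formula: "s_vertex l col v = (-1) ^ card ({1..<l} - {i. i \<notin> B \<and> Suc i \<in> B})"
proof -
  have "{i\<in>{1..<length ws}. \<not> mu (ws ! (i - 1)) > mu (ws ! i)} = {1..<l} - {i. i \<notin> B \<and> Suc i \<in> B}"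
    using descent_iff by auto
  then show ?thesis using s_l_nonzero_sign[OF s_l_ws_nonzero] by (simp add: s_vertex_def)
qed

lemma sign_formula_entries:
  assumes "{i\<in>{1..<l}. i \<notin> B \<and> Suc i \<in> B} = E"
  shows "s_vertex l col v = (-1) ^ (l - 1 - card E)"
proof -
  have "{1..<l} - {i. i \<notin> B \<and> Suc i \<in> B} = {1..<l} - E" using assms by auto
  moreover have "card ({1..<l} - E) = l - 1 - card E" using assms by (subst card_Diff_subset) auto
  ultimately show ?thesis using sign_formula by metis
qed

lemma cut_non_descent:
  assumes "i \<in> {1..<l}" "\<not> (i \<notin> B \<and> Suc i \<in> B)"
  shows "mu (card ({1..i} \<inter> B), sum v ({1..i} - B))
       < mu (card ({Suc i..l} \<inter> B), sum v ({Suc i..l} - B))"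
proof -
  have "mu (vsum (take i ws)) < mu (vsum (drop i ws))"
    using s_l_nonzero_no_descent[OF s_l_ws_nonzero, of i] assms descent_iff[of i] by (simp del: upt_Suc)
  then show ?thesis using assms vsum_take_ws[of i] vsum_drop_ws[of i] by (simp del: upt_Suc)
qed

lemma cut_descent:
  assumes "i \<in> {1..<l}" "i \<notin> B" "Suc i \<in> B"
  shows "mu (card ({1..i} \<inter> B), sum v ({1..i} - B))
       \<ge> mu (card ({Suc i..l} \<inter> B), sum v ({Suc i..l} - B))"
proof -
  have "mu (vsum (take i ws)) \<ge> mu (vsum (drop i ws))"
    using s_l_nonzero_descent[OF s_l_ws_nonzero, of i] assms descent_iff[of i] by (simp del: upt_Suc)
  then show ?thesis using assms vsum_take_ws[of i] vsum_drop_ws[of i] by (simp del: upt_Suc)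
qed

lemma white_weight_less_at_non_descent:
  assumes "i \<in> {1..<l}" "\<not> (i \<notin> B \<and> Suc i \<in> B)"
    and "{1..i} \<inter> B = {p}" "{Suc i..l} \<inter> B = {q}"
  shows "sum v ({1..i} - B) < sum v ({Suc i..l} - B)"
  using cut_non_descent[OF assms(1,2)] assms(3,4) by (simp add: mu_one del: of_nat_sum)

lemma white_weight_ge_at_descent:
  assumes "i \<in> {1..<l}" "i \<notin> B" "Suc i \<in> B"
    and "{1..i} \<inter> B = {p}" "{Suc i..l} \<inter> B = {q}"
  shows "sum v ({1..i} - B) \<ge> sum v ({Suc i..l} - B)"
  using cut_descent[OF assms(1-3)] assms(4,5) by (simp add: mu_one del: of_nat_sum)

lemma length_ge_3:
  assumes "card B = 2"
  shows "3 \<le> l"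
proof (rule ccontr)
  assume "\<not> 3 \<le> l"
  moreover have "2 \<le> l" using card_mono[OF _ black_set_subset, of l col] assms by simp
  ultimately have l: "l = 2" by simp
  have "B = {1..2}"
    using card_subset_eq[OF finite_atLeastAtMost black_set_subset[of l col]] assms l by simp
  then have "sum v ({1..1} - B) < sum v ({Suc 1..l} - B)"
    using l by (intro white_weight_less_at_non_descent[of 1 1 2]) auto
  moreover have "{1..1} - B = {}" "{Suc 1..l} - B = {}" using \<open>B = {1..2}\<close> l by auto
  ultimately show False by (metis sum.empty less_irrefl)
qed

lemma black_set_1_2:
  assumes "B = {1, 2}"
  shows "s_vertex l col v = (-1) ^ (l - 1)"
proof -
  have "{i\<in>{1..<l}. i \<notin> B \<and> Suc i \<in> B} = {}" using assms by auto
  then show ?thesis using sign_formula_entries by (metis card.empty diff_zero)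
qed

lemma black_set_1_a:
  assumes a: "3 \<le> a" and B: "B = {1, a}"
  shows "(\<Sum>i=2..a-2. v i) < v (a - 1) + (\<Sum>i=a+1..l. v i)
    \<and> (\<Sum>i=2..a-1. v i) \<ge> (\<Sum>i=a+1..l. v i)
    \<and> s_vertex l col v = (-1) ^ l"
proof -
  have al: "a \<le> l" using B black_set_subset[of l col] by auto
  have "Suc (a - 2) \<notin> {1, a}" "a - 1 \<notin> {1, a}" using a by auto
  then have white: "Suc (a - 2) \<notin> B" "a - 1 \<notin> B" using B by simp_all
  have "sum v ({1..a-2} - B) < sum v ({Suc (a-2)..l} - B)"
  proof (rule white_weight_less_at_non_descent)
    show "a - 2 \<in> {1..<l}" using a al by auto
    show "\<not> (a - 2 \<notin> B \<and> Suc (a - 2) \<in> B)" using white by blast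
    show "{1..a-2} \<inter> B = {1}" "{Suc (a-2)..l} \<inter> B = {a}" using a al unfolding B by auto
  qed
  moreover have "{1..a-2} - B = {2..a-2}" "{Suc (a-2)..l} - B = insert (a-1) {a+1..l}"
    using a al unfolding B by auto
  ultimately have less: "(\<Sum>i=2..a-2. v i) < v (a - 1) + (\<Sum>i=a+1..l. v i)" by simp
  have "sum v ({1..a-1} - B) \<ge> sum v ({Suc (a-1)..l} - B)"
  proof (rule white_weight_ge_at_descent)
    show "{1..a-1} \<inter> B = {1}" "{Suc (a-1)..l} \<inter> B = {a}" using a al unfolding B by auto
    show "a - 1 \<in> {1..<l}" using a al by auto
    show "a - 1 \<notin> B" by (fact white(2))
    show "Suc (a - 1) \<in> B" using a B by simp
  qed
  moreover have "{1..a-1} - B = {2..a-1}" "{Suc (a-1)..l} - B = {a+1..l}" using a al unfolding B by auto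
  ultimately have ge: "(\<Sum>i=2..a-1. v i) \<ge> (\<Sum>i=a+1..l. v i)" by simp
  have "{i\<in>{1..<l}. i \<notin> B \<and> Suc i \<in> B} = {a - 1}" using a al unfolding B by auto
  then have "s_vertex l col v = (-1) ^ (l - 1 - card {a - 1})" by (rule sign_formula_entries)
  also have "\<dots> = (-1) ^ l" using neg_one_power_diff_even[of 2 l] a al by (simp add: numeral_2_eq_2)
  finally show ?thesis using less ge by simp
qed

lemma black_set_2_3:
  assumes B: "B = {2, 3}"
  shows "v 1 < (\<Sum>i=4..l. v i) \<and> s_vertex l col v = (-1) ^ l"
proof -
  have l: "3 \<le> l" using B black_set_subset[of l col] by auto
  have "sum v ({1..2} - B) < sum v ({Suc 2..l} - B)"
  proof (rule white_weight_less_at_non_descent)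
    show "2 \<in> {1..<l}" using l by simp
    show "\<not> (2 \<notin> B \<and> Suc 2 \<in> B)" using B by simp
    show "{1..2} \<inter> B = {2}" "{Suc 2..l} \<inter> B = {3}" using l unfolding B by auto
  qed
  moreover have "{1..2} - B = {1}" "{Suc 2..l} - B = {4..l}" using l unfolding B by auto
  ultimately have less: "v 1 < (\<Sum>i=4..l. v i)" by simp
  have "{i\<in>{1..<l}. i \<notin> B \<and> Suc i \<in> B} = {1}" using l unfolding B by auto
  then have "s_vertex l col v = (-1) ^ (l - 1 - card {1::nat})" by (rule sign_formula_entries)
  also have "\<dots> = (-1) ^ l" using neg_one_power_diff_even[of 2 l] l by (simp add: numeral_2_eq_2)
  finally show ?thesis using less by simp
qed

lemma black_set_2_a:
  assumes a: "4 \<le> a" and B: "B = {2, a}"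
  shows "v 1 + (\<Sum>i=3..a-2. v i) < v (a - 1) + (\<Sum>i=a+1..l. v i)
    \<and> v 1 + (\<Sum>i=3..a-1. v i) \<ge> (\<Sum>i=a+1..l. v i)
    \<and> s_vertex l col v = (-1) ^ (l - 1)"
proof -
  have al: "a \<le> l" using B black_set_subset[of l col] by auto
  have "Suc (a - 2) \<notin> {2, a}" "a - 1 \<notin> {2, a}" using a by auto
  then have white: "Suc (a - 2) \<notin> B" "a - 1 \<notin> B" using B by simp_all
  have "sum v ({1..a-2} - B) < sum v ({Suc (a-2)..l} - B)"
  proof (rule white_weight_less_at_non_descent)
    show "a - 2 \<in> {1..<l}" using a al by auto
    show "\<not> (a - 2 \<notin> B \<and> Suc (a - 2) \<in> B)" using white by blast
    show "{1..a-2} \<inter> B = {2}" "{Suc (a-2)..l} \<inter> B = {a}" using a al unfolding B by auto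
  qed
  moreover have "{1..a-2} - B = insert 1 {3..a-2}" "{Suc (a-2)..l} - B = insert (a-1) {a+1..l}"
    using a al unfolding B by auto
  ultimately have less: "v 1 + (\<Sum>i=3..a-2. v i) < v (a - 1) + (\<Sum>i=a+1..l. v i)" by simp
  have "sum v ({1..a-1} - B) \<ge> sum v ({Suc (a-1)..l} - B)"
  proof (rule white_weight_ge_at_descent)
    show "a - 1 \<in> {1..<l}" using a al by auto
    show "a - 1 \<notin> B" by (fact white(2))
    show "Suc (a - 1) \<in> B" using a B by simp
    show "{1..a-1} \<inter> B = {2}" "{Suc (a-1)..l} \<inter> B = {a}" using a al unfolding B by auto
  qed
  moreover have "{1..a-1} - B = insert 1 {3..a-1}" "{Suc (a-1)..l} - B = {a+1..l}"
    using a al unfolding B by auto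
  ultimately have ge: "v 1 + (\<Sum>i=3..a-1. v i) \<ge> (\<Sum>i=a+1..l. v i)" by simp
  have "{i\<in>{1..<l}. i \<notin> B \<and> Suc i \<in> B} = {1, a - 1}" using a al unfolding B by auto
  then have "s_vertex l col v = (-1) ^ (l - 1 - card {1, a - 1})" by (rule sign_formula_entries)
  also have "\<dots> = (-1) ^ (l - 1)"
  proof -
    have "l - 1 - card {1, a - 1} = (l - 1) - 2" "2 \<le> l - 1" using a al by simp_all
    then show ?thesis using neg_one_power_diff_even[of 2 "l - 1"] by simp
  qed
  finally show ?thesis using less ge by simp
qed

end

theorem lemma4p10:
  fixes l :: nat and col :: "nat \<Rightarrow> color" and v :: "nat \<Rightarrow> nat"
  assumes vpos: "\<forall>i\<in>{1..l}. v i \<ge> 1"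
    and r2: "r_vertex l col v = 2"
    and card2: "card (black_set l col) = 2"
    and s_nz: "s_vertex l col v \<noteq> 0"
  shows "l \<ge> 3
    \<and> (black_set l col = {1, 2} \<longrightarrow> s_vertex l col v = (-1) ^ (l - 1))
    \<and> (\<forall>a\<ge>3. black_set l col = {1, a} \<longrightarrow>
          (\<Sum>i=2..a-2. v i) < v (a - 1) + (\<Sum>i=a+1..l. v i)
        \<and> (\<Sum>i=2..a-1. v i) \<ge> (\<Sum>i=a+1..l. v i)
        \<and> s_vertex l col v = (-1) ^ l)
    \<and> (black_set l col = {2, 3} \<longrightarrow>
          v 1 < (\<Sum>i=4..l. v i) \<and> s_vertex l col v = (-1) ^ l)
    \<and> (\<forall>a\<ge>4. black_set l col = {2, a} \<longrightarrow>
          v 1 + (\<Sum>i=3..a-2. v i) < v (a - 1) + (\<Sum>i=a+1..l. v i)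
        \<and> v 1 + (\<Sum>i=3..a-1. v i) \<ge> (\<Sum>i=a+1..l. v i)
        \<and> s_vertex l col v = (-1) ^ (l - 1))"
proof -
  have "v i = 1" if "i \<in> black_set l col" for i
  proof (rule sum_eq_card_imp_eq_1[OF _ _ _ that])
    show "finite (black_set l col)" using finite_subset[OF black_set_subset] by blast
    show "\<forall>i\<in>black_set l col. 1 \<le> v i" using vpos black_set_subset by blast
    show "sum v (black_set l col) = card (black_set l col)" using r2 card2 by (simp add: r_vertex_def)
  qed
  then interpret nonzero_unit_black_vertex l col v
    using s_nz by unfold_locales
  show ?thesis
    using length_ge_3[OF card2] black_set_1_2 black_set_1_a black_set_2_3 black_set_2_a
    by (intro conjI allI impI) simp_all
qed

end
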